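(* Let $k\ge1$. The data are $(R_0,\Sigma_0)$, with $R_0$ a random $k\times2$ matrix, $vec(R_0)\sim N(a_\Delta\otimes\mu,\Sigma_0)$, $a_\Delta=(\Delta,1)'$, and $\Sigma_0$ a known positive definite $2k\times2k$ matrix. With $e_1=(1,0)'$, $e_2=(0,1)'$, let $C=[(e_1'\otimes I_k)\Sigma_0(e_1\otimes I_k)]^{-1/2}$, $M=(e_2'\otimes I_k)\Sigma_0^{-1}(e_2\otimes I_k)$, $D=M^{1/2}$, $S=C(e_1'\otimes I_k)vec(R_0)$, $T=M^{-1/2}(e_2'\otimes I_k)\Sigma_0^{-1}vec(R_0)$, and define $$AR=S'S,\qquad LM=S'N_{CD^{-1}T}S,$$ $$LR=\sup_{\Delta\in\mathbb{R}}vec(R_0)'\Sigma_0^{-1/2}N_{\Sigma_0^{-1/2}(a_\Delta\otimes I_k)}\Sigma_0^{-1/2}vec(R_0)-T'T,$$ $$QLR=\frac{AR-T'T+\sqrt{(AR-T'T)^2+4\,LM\cdot T'T}}{2}.$$ Then $AR$, $LM$, $LR$ and $QLR$ are invariant under the action of $g=(g_1,g_2)\in\mathcal{G}_L(k)\times\mathcal{G}_T(2)$ given by $g\circ(R_0,\Sigma_0)=(g_1R_0g_2',\ (g_2\otimes g_1)\Sigma_0(g_2'\otimes g_1'))$; that is, each statistic takes the same value at $g\circ(R_0,\Sigma_0)$ as at $(R_0,\Sigma_0)$.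
   Context: $N_A=A(A'A)^{-1}A'$ for a matrix (or vector) $A$ of full column rank. Matrix square roots are symmetric positive definite. $\mathcal{G}_L(k)$: invertible $k\times k$ matrices; $\mathcal{G}_T(2)$: invertible lower-triangular $2\times2$ matrices. In the IV model, $R_0=RB_0$ and $\Sigma_0=(B_0'\otimes I_k)\Sigma(B_0\otimes I_k)$ for $B_0=\begin{pmatrix}1&0\\-\beta_0&1\end{pmatrix}$ and $\Delta=\beta-\beta_0$; the statistics above are the Anderson–Rubin, score, likelihood ratio and quasi-likelihood ratio statistics for $H_0:\beta=\beta_0$. *)

theory Defs
  imports "HOL-Analysis.Analysis" "HOL-Library.Numeral_Type"
begin

text \<open>Matrices are HOL-Analysis matrices real^'c^'r (r rows, c columns).
  The dimension k is the finite index type 'k. Vectors of length 2k are indexed by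
  2 \<times> 'k, the pair (a,i) standing for entry i of block a; this is the ordering of vec.\<close>

definition pos_def :: "real^'n^'n \<Rightarrow> bool" where
  "pos_def A \<longleftrightarrow> transpose A = A \<and> (\<forall>x. x \<noteq> 0 \<longrightarrow> x \<bullet> (A *v x) > 0)"

definition msqrt :: "real^'n^'n \<Rightarrow> real^'n^'n" where
  "msqrt A = (THE S. pos_def S \<and> S ** S = A)"

definition vecm :: "real^2^'k \<Rightarrow> real^(2 \<times> 'k)" where
  "vecm R = (\<chi> p. R $ snd p $ fst p)"

definition kron :: "real^'b^'a \<Rightarrow> real^'d^'c \<Rightarrow> real^('b \<times> 'd)^('a \<times> 'c)" where
  "kron A B = (\<chi> p q. A $ fst p $ fst q * B $ snd p $ snd q)"

text \<open>v \<otimes> I_k for a column vector v in R^2 (a 2k x k matrix).\<close>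
definition kronI :: "real^2 \<Rightarrow> real^'k^(2 \<times> 'k)" where
  "kronI v = (\<chi> p j. v $ fst p * (if snd p = j then 1 else 0))"

definition colmat :: "real^'n \<Rightarrow> real^1^'n" where
  "colmat v = (\<chi> i j. v $ i)"

definition projm :: "real^'c^'r \<Rightarrow> real^'r^'r" where
  "projm A = A ** matrix_inv (transpose A ** A) ** transpose A"

definition e1 :: "real^2" where "e1 = axis 1 1"
definition e2 :: "real^2" where "e2 = axis 2 1"
definition aD :: "real \<Rightarrow> real^2" where "aD \<Delta> = vector [\<Delta>, 1]"

definition Cmat :: "real^(2 \<times> 'k)^(2 \<times> 'k) \<Rightarrow> real^'k^'k" where
  "Cmat Sig = matrix_inv (msqrt (transpose (kronI e1) ** Sig ** (kronI e1 :: real^'k^(2 \<times> 'k))))"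

definition Mmat :: "real^(2 \<times> 'k)^(2 \<times> 'k) \<Rightarrow> real^'k^'k" where
  "Mmat Sig = transpose (kronI e2) ** matrix_inv Sig ** (kronI e2 :: real^'k^(2 \<times> 'k))"

definition Dmat :: "real^(2 \<times> 'k)^(2 \<times> 'k) \<Rightarrow> real^'k^'k" where
  "Dmat Sig = msqrt (Mmat Sig)"

definition Sstat :: "real^2^'k \<Rightarrow> real^(2 \<times> 'k)^(2 \<times> 'k) \<Rightarrow> real^'k" where
  "Sstat R Sig = Cmat Sig *v (transpose (kronI e1 :: real^'k^(2 \<times> 'k)) *v vecm R)"

definition Tstat :: "real^2^'k \<Rightarrow> real^(2 \<times> 'k)^(2 \<times> 'k) \<Rightarrow> real^'k" where
  "Tstat R Sig = matrix_inv (msqrt (Mmat Sig)) *v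
     (transpose (kronI e2 :: real^'k^(2 \<times> 'k)) *v (matrix_inv Sig *v vecm R))"

definition AR :: "real^2^'k \<Rightarrow> real^(2 \<times> 'k)^(2 \<times> 'k) \<Rightarrow> real" where
  "AR R Sig = Sstat R Sig \<bullet> Sstat R Sig"

definition LM :: "real^2^'k \<Rightarrow> real^(2 \<times> 'k)^(2 \<times> 'k) \<Rightarrow> real" where
  "LM R Sig = Sstat R Sig \<bullet>
     (projm (colmat (Cmat Sig *v (matrix_inv (Dmat Sig) *v Tstat R Sig))) *v Sstat R Sig)"

definition LR :: "real^2^'k \<Rightarrow> real^(2 \<times> 'k)^(2 \<times> 'k) \<Rightarrow> real" where
  "LR R Sig = (SUP \<Delta>::real. vecm R \<bullet> (matrix_inv (msqrt Sig) *v
        (projm (matrix_inv (msqrt Sig) ** (kronI (aD \<Delta>) :: real^'k^(2 \<times> 'k)))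
           *v (matrix_inv (msqrt Sig) *v vecm R))))
     - Tstat R Sig \<bullet> Tstat R Sig"

definition QLR :: "real^2^'k \<Rightarrow> real^(2 \<times> 'k)^(2 \<times> 'k) \<Rightarrow> real" where
  "QLR R Sig = (let a = AR R Sig - Tstat R Sig \<bullet> Tstat R Sig in
     (a + sqrt (a\<^sup>2 + 4 * LM R Sig * (Tstat R Sig \<bullet> Tstat R Sig))) / 2)"

definition actR :: "real^'k^'k \<Rightarrow> real^2^2 \<Rightarrow> real^2^'k \<Rightarrow> real^2^'k" where
  "actR g1 g2 R = g1 ** R ** transpose g2"

definition actS :: "real^'k^'k \<Rightarrow> real^2^2 \<Rightarrow> real^(2 \<times> 'k)^(2 \<times> 'k) \<Rightarrow> real^(2 \<times> 'k)^(2 \<times> 'k)" where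
  "actS g1 g2 Sig = kron g2 g1 ** Sig ** kron (transpose g2) (transpose g1)"

definition lower_tri2 :: "real^2^2 \<Rightarrow> bool" where
  "lower_tri2 g \<longleftrightarrow> g $ 1 $ 2 = 0"

end

theory Submission
  imports Defs
begin

text \<open>Write \<open>G = g\<^sub>2 \<otimes> g\<^sub>1\<close>, so that the action is \<open>vec R \<mapsto> G vec R\<close>, \<open>\<Sigma> \<mapsto> G\<Sigma>G'\<close>. Since \<open>g\<^sub>2\<close> is
  lower triangular, the first block \<open>r = (e\<^sub>1'\<otimes>I) vec R\<close> and \<open>\<Sigma>\<^sub>1\<^sub>1\<close> transform as \<open>L\<^sub>1r\<close>, \<open>L\<^sub>1\<Sigma>\<^sub>1\<^sub>1L\<^sub>1'\<close>
  with \<open>L\<^sub>1 = g\<^sub>2\<^sub>1\<^sub>1 g\<^sub>1\<close>, and \<open>u = (e\<^sub>2'\<otimes>I)\<Sigma>\<^sup>-\<^sup>1vec R\<close> and \<open>M\<close> as \<open>L\<^sub>2u\<close>, \<open>L\<^sub>2ML\<^sub>2'\<close> with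
  \<open>L\<^sub>2 = g\<^sub>1'\<^sup>-\<^sup>1/g\<^sub>2\<^sub>2\<^sub>2\<close>.
  Once the symmetric square roots are unfolded (they exist and are unique by the spectral theorem),
  \<open>AR = r'\<Sigma>\<^sub>1\<^sub>1\<^sup>-\<^sup>1r\<close>, \<open>T'T = u'M\<^sup>-\<^sup>1u\<close> and \<open>LM = (r'\<Sigma>\<^sub>1\<^sub>1\<^sup>-\<^sup>1w)\<^sup>2/(w'\<Sigma>\<^sub>1\<^sub>1\<^sup>-\<^sup>1w)\<close> with \<open>w = M\<^sup>-\<^sup>1u\<close>.
  Forms \<open>y'P\<^sup>-\<^sup>1z\<close> are unchanged by \<open>y \<mapsto> Ly, P \<mapsto> LPL'\<close>, and \<open>w\<close> becomes a multiple of \<open>L\<^sub>1w\<close>, to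
  which \<open>LM\<close> is insensitive; \<open>QLR\<close> is a function of \<open>AR\<close>, \<open>LM\<close> and \<open>T'T\<close>.
  For \<open>LR\<close>, the supremum over \<open>\<Delta>\<close> equals the supremum of \<open>2u'\<Sigma>\<^sup>-\<^sup>1x - u'\<Sigma>\<^sup>-\<^sup>1u\<close> over all
  \<open>u = (w \<otimes> I\<^sub>k)y\<close> with \<open>w \<in> \<real>\<^sup>2\<close>, and \<open>G\<close> permutes these \<open>u\<close>.\<close>

section \<open>Matrix inverses\<close>

lemma matrix_inv:
  fixes A :: "real^'n^'n"
  assumes "invertible A"
  shows matrix_inv_right: "A ** matrix_inv A = mat 1"
    and matrix_inv_left: "matrix_inv A ** A = mat 1"
proof -
  have "\<exists>A'. A ** A' = mat 1 \<and> A' ** A = mat 1" using assms invertible_def by blast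
  then have "A ** matrix_inv A = mat 1 \<and> matrix_inv A ** A = mat 1"
    unfolding matrix_inv_def by (rule someI_ex)
  then show "A ** matrix_inv A = mat 1" "matrix_inv A ** A = mat 1" by auto
qed

lemma matrix_inv_unique:
  fixes A B :: "real^'n^'n"
  assumes "A ** B = mat 1"
  shows "matrix_inv A = B"
proof -
  have "invertible A" using assms invertible_right_inverse by blast
  have "matrix_inv A = matrix_inv A ** (A ** B)" using assms by simp
  also have "\<dots> = B" by (simp add: matrix_mul_assoc matrix_inv_left[OF \<open>invertible A\<close>])
  finally show ?thesis .
qed

lemma matrix_inv_mult_vector_cancel:
  fixes A :: "real^'n^'n"
  shows "invertible A \<Longrightarrow> matrix_inv A *v (A *v x) = x"
  by (simp add: matrix_vector_mul_assoc matrix_inv_left)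

lemma mult_vector_matrix_inv_cancel:
  fixes A :: "real^'n^'n"
  shows "invertible A \<Longrightarrow> A *v (matrix_inv A *v x) = x"
  by (simp add: matrix_vector_mul_assoc matrix_inv_right)

lemma invertible_mult_vector_eq_0:
  fixes A :: "real^'n^'n"
  shows "invertible A \<Longrightarrow> A *v x = 0 \<Longrightarrow> x = 0"
  by (metis matrix_inv_mult_vector_cancel matrix_vector_mult_0_right)

lemma invertible_if_kernel_trivial:
  fixes A :: "real^'n^'n"
  assumes "\<And>x. A *v x = 0 \<Longrightarrow> x = 0"
  shows "invertible A"
  using assms invertible_left_inverse matrix_left_invertible_ker by blast

lemma invertible_matrix_inv:
  fixes A :: "real^'n^'n"
  shows "invertible A \<Longrightarrow> invertible (matrix_inv A)"
  using matrix_inv invertible_def by blast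

lemma matrix_inv_matrix_inv:
  fixes A :: "real^'n^'n"
  shows "invertible A \<Longrightarrow> matrix_inv (matrix_inv A) = A"
  by (rule matrix_inv_unique) (rule matrix_inv_left)

lemma matrix_inv_mult:
  fixes A B :: "real^'n^'n"
  assumes "invertible A" "invertible B"
  shows "matrix_inv (A ** B) = matrix_inv B ** matrix_inv A"
proof (rule matrix_inv_unique)
  have "A ** B ** (matrix_inv B ** matrix_inv A) = A ** (B ** matrix_inv B) ** matrix_inv A"
    by (simp add: matrix_mul_assoc)
  then show "A ** B ** (matrix_inv B ** matrix_inv A) = mat 1"
    by (simp add: matrix_inv_right assms)
qed

lemma matrix_inv_transpose:
  fixes A :: "real^'n^'n"
  assumes "invertible A"
  shows "matrix_inv (transpose A) = transpose (matrix_inv A)"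
proof (rule matrix_inv_unique)
  have "transpose A ** transpose (matrix_inv A) = transpose (matrix_inv A ** A)"
    by (simp add: matrix_transpose_mul)
  then show "transpose A ** transpose (matrix_inv A) = mat 1" by (simp add: matrix_inv_left assms)
qed

lemma matrix_inv_scaleR:
  fixes A :: "real^'n^'n"
  assumes "invertible A" "c \<noteq> 0"
  shows "matrix_inv (c *\<^sub>R A) = (1/c) *\<^sub>R matrix_inv A"
  by (rule matrix_inv_unique) (use assms in \<open>simp add: matrix_scalar_ac matrix_inv_right\<close>)

lemma inner_transpose_mult_vector:
  fixes B :: "real^'n^'m"
  shows "x \<bullet> (transpose B *v w) = (B *v x) \<bullet> w"
  by (metis dot_lmul_matrix inner_commute transpose_matrix_vector)

lemma inner_mult_vector_transpose:
  fixes B :: "real^'n^'m"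
  shows "x \<bullet> (B *v w) = (transpose B *v x) \<bullet> w"
  using inner_transpose_mult_vector[of x "transpose B" w] by simp

lemma inner_symmetric_matrix:
  fixes A :: "real^'n^'n"
  assumes "transpose A = A"
  shows "x \<bullet> (A *v y) = (A *v x) \<bullet> y"
  using inner_mult_vector_transpose[of x A y] assms by simp

lemma inner_matrix_inv_congruence:
  fixes L P :: "real^'n^'n"
  assumes L: "invertible L" and P: "invertible P"
  shows "(L *v y) \<bullet> (matrix_inv (L ** P ** transpose L) *v (L *v z)) = y \<bullet> (matrix_inv P *v z)"
proof -
  have "invertible (transpose L)" using L by (rule transpose_invertible)
  then have "matrix_inv (L ** P ** transpose L)
      = transpose (matrix_inv L) ** (matrix_inv P ** matrix_inv L)"
    by (simp add: matrix_inv_mult matrix_inv_transpose invertible_mult L P)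
  then have "(L *v y) \<bullet> (matrix_inv (L ** P ** transpose L) *v (L *v z))
      = (matrix_inv L *v (L *v y)) \<bullet> (matrix_inv P *v (matrix_inv L *v (L *v z)))"
    by (simp only: inner_transpose_mult_vector matrix_vector_mul_assoc[symmetric])
  then show ?thesis by (simp add: matrix_inv_mult_vector_cancel L)
qed

section \<open>Positive definite matrices and their square roots\<close>

lemma pos_def_symmetric: "pos_def A \<Longrightarrow> transpose A = A"
  by (simp add: pos_def_def)

lemma pos_def_pos: "pos_def A \<Longrightarrow> x \<noteq> 0 \<Longrightarrow> x \<bullet> (A *v x) > 0"
  by (simp add: pos_def_def)

lemma pos_def_nonneg: "pos_def A \<Longrightarrow> x \<bullet> (A *v x) \<ge> 0"
  by (cases "x = 0") (auto dest: pos_def_pos[of A x])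

lemma pos_def_invertible:
  fixes A :: "real^'n^'n"
  assumes "pos_def A"
  shows "invertible A"
  by (rule invertible_if_kernel_trivial) (use pos_def_pos[OF assms] in fastforce)

lemma pos_def_congruence:
  fixes A :: "real^'n^'n" and B :: "real^'m^'n"
  assumes A: "pos_def A" and inj: "\<And>x. B *v x = 0 \<Longrightarrow> x = 0"
  shows "pos_def (transpose B ** A ** B)"
  unfolding pos_def_def
proof (intro conjI allI impI)
  show "transpose (transpose B ** A ** B) = transpose B ** A ** B"
    by (simp add: matrix_transpose_mul pos_def_symmetric[OF A] matrix_mul_assoc)
  fix x :: "real^'m" assume "x \<noteq> 0"
  then have "(B *v x) \<bullet> (A *v (B *v x)) > 0" using inj pos_def_pos[OF A] by blast
  moreover have "x \<bullet> ((transpose B ** A ** B) *v x) = (B *v x) \<bullet> (A *v (B *v x))"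
    by (simp only: inner_transpose_mult_vector matrix_vector_mul_assoc[symmetric])
  ultimately show "x \<bullet> ((transpose B ** A ** B) *v x) > 0" by simp
qed

lemma pos_def_matrix_inv:
  fixes A :: "real^'n^'n"
  assumes A: "pos_def A"
  shows "pos_def (matrix_inv A)"
  unfolding pos_def_def
proof (intro conjI allI impI)
  have "invertible A" by (rule pos_def_invertible[OF A])
  then show "transpose (matrix_inv A) = matrix_inv A"
    using matrix_inv_transpose pos_def_symmetric[OF A] by metis
  fix x :: "real^'n" assume "x \<noteq> 0"
  define y where "y = matrix_inv A *v x"
  have x: "x = A *v y" unfolding y_def by (simp add: mult_vector_matrix_inv_cancel \<open>invertible A\<close>)
  then have "y \<noteq> 0" using \<open>x \<noteq> 0\<close> by auto
  then have "y \<bullet> (A *v y) > 0" by (rule pos_def_pos[OF A])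
  moreover have "x \<bullet> (matrix_inv A *v x) = y \<bullet> (A *v y)"
    by (simp add: x[symmetric] y_def[symmetric] inner_commute)
  ultimately show "x \<bullet> (matrix_inv A *v x) > 0" by simp
qed

lemma nonpos_if_linear_le_quadratic:
  fixes a K :: real
  assumes "\<And>t. 2 * t * a \<le> t^2 * K"
  shows "a \<le> 0"
proof (rule ccontr)
  assume "\<not> a \<le> 0"
  define t where "t = a / (\<bar>K\<bar> + 1)"
  have "t > 0" using \<open>\<not> a \<le> 0\<close> unfolding t_def by (simp add: add_pos_nonneg)
  then have "2 * a \<le> t * K" using assms[of t] by (simp add: power2_eq_square mult.assoc)
  also have "t * K \<le> t * \<bar>K\<bar>" using \<open>t > 0\<close> by (simp add: mult_left_mono)
  also have "t * \<bar>K\<bar> \<le> a" unfolding t_def using \<open>\<not> a \<le> 0\<close> by (simp add: divide_le_eq mult_left_mono)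
  finally show False using \<open>\<not> a \<le> 0\<close> by simp
qed

lemma rayleigh_maximiser_eigenvector:
  fixes A :: "real^'n^'n"
  assumes A: "transpose A = A" and V: "subspace V" and invariant: "\<forall>x\<in>V. A *v x \<in> V"
    and "v \<in> V" and vv: "v \<bullet> v = 1"
    and rayleigh: "\<And>y. y \<in> V \<Longrightarrow> y \<bullet> (A *v y) \<le> (v \<bullet> (A *v v)) * (y \<bullet> y)"
  shows "A *v v = (v \<bullet> (A *v v)) *\<^sub>R v"
proof -
  define l where "l = v \<bullet> (A *v v)"
  define w where "w = A *v v - l *\<^sub>R v"
  have "w \<in> V" unfolding w_def using invariant \<open>v \<in> V\<close> V by (simp add: subspace_diff subspace_mul)
  have wv: "w \<bullet> v = 0" unfolding w_def l_def using vv
    by (simp add: inner_diff_left inner_commute[of "A *v v" v])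
  have wAv: "w \<bullet> (A *v v) = w \<bullet> w"
  proof -
    have "A *v v = w + l *\<^sub>R v" unfolding w_def by simp
    then show ?thesis using wv by (simp add: inner_add_right inner_commute)
  qed
  text \<open>Along \<open>v + t w\<close> the Rayleigh bound is \<open>2 t |w|\<^sup>2 \<le> t\<^sup>2 K\<close>,
    impossible for small \<open>t > 0\<close> unless \<open>w = 0\<close>.\<close>
  define K where "K = l * (w \<bullet> w) - w \<bullet> (A *v w)"
  have quadratic: "2 * t * (w \<bullet> w) \<le> t^2 * K" for t
  proof -
    have "v + t *\<^sub>R w \<in> V" using \<open>v \<in> V\<close> \<open>w \<in> V\<close> V by (simp add: subspace_add subspace_mul)
    then have b: "(v + t *\<^sub>R w) \<bullet> (A *v (v + t *\<^sub>R w)) \<le> l * ((v + t *\<^sub>R w) \<bullet> (v + t *\<^sub>R w))"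
      unfolding l_def by (rule rayleigh)
    have "v \<bullet> (A *v w) = w \<bullet> (A *v v)"
      using inner_symmetric_matrix[OF A, of v w] by (simp add: inner_commute)
    then have "(v + t *\<^sub>R w) \<bullet> (A *v (v + t *\<^sub>R w)) = l + 2 * t * (w \<bullet> w) + t^2 * (w \<bullet> (A *v w))"
      by (simp add: matrix_vector_right_distrib matrix_vector_mult_scaleR inner_add_left inner_add_right
          l_def wAv power2_eq_square algebra_simps)
    moreover have "(v + t *\<^sub>R w) \<bullet> (v + t *\<^sub>R w) = 1 + t^2 * (w \<bullet> w)"
      using vv wv by (simp add: inner_add_left inner_add_right inner_commute power2_eq_square)
    ultimately show ?thesis using b unfolding K_def by (simp add: algebra_simps)
  qed
  have "w \<bullet> w \<le> 0" by (rule nonpos_if_linear_le_quadratic[OF quadratic])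
  then have "w = 0" by (metis inner_ge_zero order_antisym inner_eq_zero_iff)
  then show ?thesis unfolding w_def l_def by simp
qed

lemma symmetric_matrix_unit_eigenvector:
  fixes A :: "real^'n^'n"
  assumes A: "transpose A = A" and V: "subspace V" and invariant: "\<forall>x\<in>V. A *v x \<in> V"
    and nontrivial: "V \<noteq> {0}"
  shows "\<exists>v\<in>V. norm v = 1 \<and> A *v v = (v \<bullet> (A *v v)) *\<^sub>R v"
proof -
  let ?S = "V \<inter> sphere 0 1"
  have "compact ?S"
    by (intro closed_Int_compact closed_subspace V compact_sphere)
  obtain x where x: "x \<in> V" "x \<noteq> 0" using nontrivial V subspace_0 by blast
  have "x /\<^sub>R norm x \<in> ?S" using x V by (simp add: subspace_mul)
  then have "?S \<noteq> {}" by blast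
  moreover have "continuous_on ?S (\<lambda>x. x \<bullet> (A *v x))"
    by (intro continuous_intros linear_continuous_on matrix_vector_mul_linear)
  ultimately obtain v where v: "v \<in> ?S" and vmax: "\<forall>y\<in>?S. y \<bullet> (A *v y) \<le> v \<bullet> (A *v v)"
    using continuous_attains_sup[OF \<open>compact ?S\<close>] by blast
  have "v \<in> V" and "norm v = 1" using v by auto
  moreover have "y \<bullet> (A *v y) \<le> (v \<bullet> (A *v v)) * (y \<bullet> y)" if "y \<in> V" for y
  proof (cases "y = 0")
    case False
    let ?z = "y /\<^sub>R norm y"
    have "?z \<in> ?S" using \<open>y \<in> V\<close> False V by (simp add: subspace_mul)
    then have "?z \<bullet> (A *v ?z) \<le> v \<bullet> (A *v v)" using vmax by blast
    moreover have "?z \<bullet> (A *v ?z) = (y \<bullet> (A *v y)) / (norm y)^2"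
      by (simp add: matrix_vector_mult_scaleR power2_eq_square divide_inverse
        mult.commute mult.left_commute)
    ultimately show ?thesis using False by (simp add: divide_le_eq mult.commute power2_norm_eq_inner)
  qed simp
  ultimately show ?thesis
    using rayleigh_maximiser_eigenvector[OF A V invariant] by (metis norm_eq_1)
qed

lemma invariant_orthogonal_eigenvector:
  fixes A :: "real^'n^'n"
  assumes A: "transpose A = A" and invariant: "\<forall>x\<in>V. A *v x \<in> V" and ev: "A *v v = c *\<^sub>R v"
  shows "\<forall>x \<in> V \<inter> {x. v \<bullet> x = 0}. A *v x \<in> V \<inter> {x. v \<bullet> x = 0}"
proof
  fix x assume x: "x \<in> V \<inter> {x. v \<bullet> x = 0}"
  have "v \<bullet> (A *v x) = (A *v v) \<bullet> x" by (rule inner_symmetric_matrix[OF A])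
  also have "\<dots> = 0" using x by (simp add: ev)
  finally show "A *v x \<in> V \<inter> {x. v \<bullet> x = 0}" using x invariant by auto
qed

lemma span_insert_unit_hyperplane:
  assumes V: "subspace V" and "v \<in> V" and vv: "v \<bullet> v = 1"
    and B: "span B = V \<inter> {x. v \<bullet> x = 0}"
  shows "span (insert v B) = V"
proof
  show "span (insert v B) \<subseteq> V"
    using B \<open>v \<in> V\<close> V by (metis Int_subset_iff insert_subset span_minimal span_superset)
  show "V \<subseteq> span (insert v B)"
  proof
    fix x assume "x \<in> V"
    then have "x - (v \<bullet> x) *\<^sub>R v \<in> span B" unfolding B using \<open>v \<in> V\<close> V vv
      by (simp add: subspace_diff subspace_mul inner_diff_right)
    then have "x - (v \<bullet> x) *\<^sub>R v \<in> span (insert v B)" by (meson span_mono subset_insertI subsetD)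
    moreover have "(v \<bullet> x) *\<^sub>R v \<in> span (insert v B)" by (simp add: span_base span_mul)
    ultimately show "x \<in> span (insert v B)" using span_add by fastforce
  qed
qed

lemma symmetric_matrix_orthonormal_eigenbasis_subspace:
  fixes A :: "real^'n^'n"
  assumes A: "transpose A = A"
  shows "subspace V \<Longrightarrow> (\<forall>x\<in>V. A *v x \<in> V) \<Longrightarrow>
    \<exists>B. B \<subseteq> V \<and> pairwise orthogonal B \<and> (\<forall>b\<in>B. norm b = 1 \<and> A *v b = (b \<bullet> (A *v b)) *\<^sub>R b)
      \<and> span B = V"
proof (induction "dim V" arbitrary: V rule: less_induct)
  case less
  show ?case
  proof (cases "V = {0}")
    case True
    then show ?thesis by (intro exI[of _ "{}"]) auto
  next
    case False
    obtain v where "v \<in> V" and "norm v = 1" and ev: "A *v v = (v \<bullet> (A *v v)) *\<^sub>R v"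
      using symmetric_matrix_unit_eigenvector[OF A less.prems False] by blast
    then have vv: "v \<bullet> v = 1" by (simp add: norm_eq_1)
    define V' where "V' = V \<inter> {x. v \<bullet> x = 0}"
    have "subspace V'" unfolding V'_def
      by (intro subspace_inter less.prems(1) subspace_hyperplane)
    moreover have "\<forall>x\<in>V'. A *v x \<in> V'"
      unfolding V'_def by (rule invariant_orthogonal_eigenvector[OF A less.prems(2) ev])
    moreover have "dim V' < dim V"
    proof -
      have "v \<notin> V'" using vv by (simp add: V'_def)
      then have "V' \<subset> V" using \<open>v \<in> V\<close> unfolding V'_def by blast
      then show ?thesis
        using dim_psubset[of V' V] span_eq_iff[THEN iffD2, OF \<open>subspace V'\<close>]
          span_eq_iff[THEN iffD2, OF less.prems(1)] by simp
    qed
    ultimately obtain B' where B': "B' \<subseteq> V'" "pairwise orthogonal B'"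
        "\<forall>b\<in>B'. norm b = 1 \<and> A *v b = (b \<bullet> (A *v b)) *\<^sub>R b" "span B' = V'"
      using less.hyps by blast
    show ?thesis
    proof (intro exI[of _ "insert v B'"] conjI)
      show "insert v B' \<subseteq> V" using B'(1) \<open>v \<in> V\<close> unfolding V'_def by auto
      show "pairwise orthogonal (insert v B')"
        using B'(1,2) unfolding V'_def by (auto simp: pairwise_insert orthogonal_def inner_commute)
      show "\<forall>b\<in>insert v B'. norm b = 1 \<and> A *v b = (b \<bullet> (A *v b)) *\<^sub>R b"
        using B'(3) \<open>norm v = 1\<close> ev by auto
      show "span (insert v B') = V"
        using span_insert_unit_hyperplane[OF less.prems(1) \<open>v \<in> V\<close> vv] B'(4) V'_def by blast
    qed
  qed
qed

lemma symmetric_matrix_orthonormal_eigenbasis: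
  fixes A :: "real^'n^'n"
  assumes "transpose A = A"
  shows "\<exists>B. finite B \<and> pairwise orthogonal B \<and> (\<forall>b\<in>B. norm b = 1 \<and> A *v b = (b \<bullet> (A *v b)) *\<^sub>R b)
    \<and> span B = UNIV"
proof -
  obtain B where B: "pairwise orthogonal B" "\<forall>b\<in>B. norm b = 1 \<and> A *v b = (b \<bullet> (A *v b)) *\<^sub>R b"
    "span B = UNIV"
    using symmetric_matrix_orthonormal_eigenbasis_subspace[OF assms, of UNIV] by auto
  have "0 \<notin> B" using B(2) by force
  then have "independent B" using B(1) pairwise_orthogonal_independent by blast
  then show ?thesis using B finiteI_independent by blast
qed

definition outer :: "real^'n \<Rightarrow> real^'n \<Rightarrow> real^'n^'n" where
  "outer a b = (\<chi> i j. a $ i * b $ j)"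

lemma outer_mult_vector: "outer a b *v x = (b \<bullet> x) *\<^sub>R a"
  by (simp add: outer_def matrix_vector_mult_def vec_eq_iff inner_vec_def sum_distrib_left
      mult.commute mult.left_commute)

lemma transpose_outer: "transpose (outer a b) = outer b a"
  by (simp add: outer_def transpose_def vec_eq_iff mult.commute)

lemma transpose_sum:
  fixes f :: "'a \<Rightarrow> real^'n^'m"
  shows "transpose (sum f S) = (\<Sum>x\<in>S. transpose (f x))"
  by (induction S rule: infinite_finite_induct) (auto simp: transpose_def vec_eq_iff)

lemma sum_mult_vector:
  fixes f :: "'a \<Rightarrow> real^'n^'m"
  shows "sum f S *v x = (\<Sum>y\<in>S. f y *v x)"
  by (induction S rule: infinite_finite_induct) (auto simp: matrix_vector_mult_add_rdistrib)

lemma sum_outer_orthonormal: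
  fixes B :: "(real^'n) set"
  assumes "finite B" and orth: "pairwise orthogonal B" and unit: "\<forall>b\<in>B. norm b = 1"
    and "span B = UNIV" and pos: "\<forall>b\<in>B. \<mu> b > 0"
  shows pos_def_sum_outer: "pos_def (\<Sum>b\<in>B. \<mu> b *\<^sub>R outer b b)"
    and sum_outer_mult_vector: "c \<in> B \<Longrightarrow> (\<Sum>b\<in>B. \<mu> b *\<^sub>R outer b b) *v c = \<mu> c *\<^sub>R c"
proof -
  define S where "S = (\<Sum>b\<in>B. \<mu> b *\<^sub>R outer b b)"
  have S: "S *v x = (\<Sum>b\<in>B. (\<mu> b * (b \<bullet> x)) *\<^sub>R b)" for x
    unfolding S_def by (simp add: sum_mult_vector scaleR_matrix_vector_assoc[symmetric] outer_mult_vector)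
  show "S *v c = \<mu> c *\<^sub>R c" if c: "c \<in> B"
  proof -
    have "b \<bullet> c = (if b = c then 1 else 0)" if "b \<in> B" for b
      using that c orth unit by (auto simp: pairwise_def orthogonal_def norm_eq_1)
    then have "S *v c = (\<Sum>b\<in>B. (if b = c then \<mu> c *\<^sub>R c else 0))"
      unfolding S by (intro sum.cong) auto
    then show ?thesis using \<open>finite B\<close> c by simp
  qed
  have "transpose S = S"
    unfolding S_def by (simp add: transpose_sum transpose_scalar transpose_outer)
  moreover have "x \<bullet> (S *v x) > 0" if "x \<noteq> 0" for x
  proof -
    obtain c where c: "c \<in> B" "c \<bullet> x \<noteq> 0"
      using \<open>x \<noteq> 0\<close> orthogonal_to_span[of x B x] \<open>span B = UNIV\<close>
      by (auto simp: orthogonal_def inner_commute)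
    have "x \<bullet> (S *v x) = (\<Sum>b\<in>B. \<mu> b * (b \<bullet> x)^2)"
      unfolding S by (simp add: inner_sum_right power2_eq_square inner_commute mult.assoc)
    also have "\<dots> \<ge> \<mu> c * (c \<bullet> x)^2"
      by (rule member_le_sum[OF c(1) _ \<open>finite B\<close>]) (simp add: pos less_imp_le)
    moreover have "\<mu> c * (c \<bullet> x)^2 > 0" using c pos by simp
    ultimately show ?thesis by linarith
  qed
  ultimately show "pos_def S" unfolding pos_def_def by blast
qed

lemma pos_def_square_root_exists:
  fixes A :: "real^'n^'n"
  assumes A: "pos_def A"
  shows "\<exists>S. pos_def S \<and> S ** S = A"
proof -
  obtain B where B: "finite B" "pairwise orthogonal B" "\<forall>b\<in>B. norm b = 1" "span B = UNIV"
    and eigen: "\<forall>b\<in>B. A *v b = (b \<bullet> (A *v b)) *\<^sub>R b"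
    using symmetric_matrix_orthonormal_eigenbasis[OF pos_def_symmetric[OF A]] by blast
  define l where "l b = b \<bullet> (A *v b)" for b
  have l_pos: "\<forall>b\<in>B. sqrt (l b) > 0"
    using pos_def_pos[OF A] B(3) unfolding l_def by (metis norm_zero real_sqrt_gt_zero zero_neq_one)
  define S where "S = (\<Sum>b\<in>B. sqrt (l b) *\<^sub>R outer b b)"
  have "(S ** S) *v x = A *v x" for x
  proof (rule real_vector.linear_eq_on_span[where B=B and f="(*v) (S ** S)" and g="(*v) A"])
    show "x \<in> span B" using B(4) by simp
    fix c assume c: "c \<in> B"
    have "(S ** S) *v c = sqrt (l c) *\<^sub>R (sqrt (l c) *\<^sub>R c)"
      unfolding S_def
      by (simp add: matrix_vector_mul_assoc[symmetric] sum_outer_mult_vector[OF B l_pos c]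
          matrix_vector_mult_scaleR)
    also have "\<dots> = l c *\<^sub>R c" using l_pos c by force
    also have "\<dots> = A *v c" using eigen c l_def by simp
    finally show "(S ** S) *v c = A *v c" .
  qed (rule matrix_vector_mul_linear)+
  then have "S ** S = A" by (simp add: matrix_eq)
  moreover have "pos_def S" unfolding S_def by (rule pos_def_sum_outer[OF B l_pos])
  ultimately show ?thesis by blast
qed

lemma pos_def_square_root_unique:
  fixes S T :: "real^'n^'n"
  assumes S: "pos_def S" and T: "pos_def T" and eq: "S ** S = T ** T"
  shows "S = T"
proof -
  obtain B where eigen: "\<forall>b\<in>B. norm b = 1 \<and> S *v b = (b \<bullet> (S *v b)) *\<^sub>R b" and "span B = UNIV"
    using symmetric_matrix_orthonormal_eigenbasis[OF pos_def_symmetric[OF S]] by blast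
  have "S *v x = T *v x" for x
  proof (rule real_vector.linear_eq_on_span[where B=B and f="(*v) S" and g="(*v) T"])
    show "x \<in> span B" using \<open>span B = UNIV\<close> by simp
    fix c assume c: "c \<in> B"
    define m where "m = c \<bullet> (S *v c)"
    have Sc: "S *v c = m *\<^sub>R c" using eigen c m_def by simp
    have "m > 0" using pos_def_pos[OF S] eigen c unfolding m_def by (metis norm_zero zero_neq_one)
    text \<open>\<open>y = T c - m c\<close> satisfies \<open>T y = -m y\<close>, which a positive definite \<open>T\<close> allows only for \<open>y = 0\<close>.\<close>
    define y where "y = T *v c - m *\<^sub>R c"
    have "T *v (T *v c) = S *v (S *v c)" using eq by (simp add: matrix_vector_mul_assoc)
    then have "T *v y + m *\<^sub>R y = 0"
      unfolding y_def by (simp add: Sc matrix_vector_mult_diff_distrib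
        matrix_vector_mult_scaleR algebra_simps)
    then have "y \<bullet> (T *v y) + m * (y \<bullet> y) = 0"
      by (metis inner_add_right inner_scaleR_right inner_zero_right)
    then have "y = 0" using pos_def_pos[OF T] \<open>m > 0\<close>
      by (metis add_pos_pos inner_gt_zero_iff less_irrefl mult_pos_pos)
    then show "S *v c = T *v c" using Sc unfolding y_def by simp
  qed (rule matrix_vector_mul_linear)+
  then show ?thesis by (simp add: matrix_eq)
qed

lemma msqrt:
  fixes A :: "real^'n^'n"
  assumes "pos_def A"
  shows pos_def_msqrt: "pos_def (msqrt A)" and msqrt_square: "msqrt A ** msqrt A = A"
proof -
  have "\<exists>!S. pos_def S \<and> S ** S = A"
    using pos_def_square_root_exists[OF assms] pos_def_square_root_unique by metis
  then have "pos_def (msqrt A) \<and> msqrt A ** msqrt A = A" unfolding msqrt_def by (rule theI')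
  then show "pos_def (msqrt A)" "msqrt A ** msqrt A = A" by auto
qed

lemma matrix_inv_msqrt:
  fixes A :: "real^'n^'n"
  assumes A: "pos_def A"
  shows symmetric_matrix_inv_msqrt: "transpose (matrix_inv (msqrt A)) = matrix_inv (msqrt A)"
    and matrix_inv_msqrt_square: "matrix_inv (msqrt A) ** matrix_inv (msqrt A) = matrix_inv A"
proof -
  have "invertible (msqrt A)" by (rule pos_def_invertible[OF pos_def_msqrt[OF A]])
  then show "transpose (matrix_inv (msqrt A)) = matrix_inv (msqrt A)"
    using matrix_inv_transpose pos_def_symmetric[OF pos_def_msqrt[OF A]] by metis
  show "matrix_inv (msqrt A) ** matrix_inv (msqrt A) = matrix_inv A"
    using matrix_inv_mult[OF \<open>invertible (msqrt A)\<close> \<open>invertible (msqrt A)\<close>] msqrt_square[OF A] by simp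
qed

lemma inner_matrix_inv_msqrt:
  fixes A :: "real^'n^'n"
  assumes A: "pos_def A"
  shows "(matrix_inv (msqrt A) *v y) \<bullet> (matrix_inv (msqrt A) *v z) = y \<bullet> (matrix_inv A *v z)"
  using inner_symmetric_matrix[OF symmetric_matrix_inv_msqrt[OF A], of y "matrix_inv (msqrt A) *v z"]
  by (simp add: matrix_vector_mul_assoc matrix_inv_msqrt_square[OF A])

section \<open>Kronecker products\<close>

lemma sum_UNIV_prod:
  "(\<Sum>q\<in>(UNIV::('a::finite \<times> 'b::finite) set). f q) = (\<Sum>a\<in>UNIV. \<Sum>b\<in>UNIV. f (a, b))"
  by (simp add: sum.cartesian_product)

lemma kron_mult:
  fixes A :: "real^'b^'a" and B :: "real^'d^'c" and C :: "real^'e^'b" and D :: "real^'f^'d"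
  shows "kron A B ** kron C D = kron (A ** C) (B ** D)"
proof -
  have "(\<Sum>q\<in>UNIV. A $ fst p $ fst q * B $ snd p $ snd q * (C $ fst q $ fst r * D $ snd q $ snd r))
     = (\<Sum>k\<in>UNIV. A $ fst p $ k * C $ k $ fst r) * (\<Sum>l\<in>UNIV. B $ snd p $ l * D $ l $ snd r)"
    for p :: "'a \<times> 'c" and r :: "'e \<times> 'f"
    by (simp add: sum_UNIV_prod sum_product mult_ac)
  then show ?thesis by (simp add: kron_def matrix_matrix_mult_def vec_eq_iff)
qed

lemma kron_mat_1: "kron (mat 1 :: real^'a^'a) (mat 1 :: real^'b^'b) = mat 1"
  by (auto simp: kron_def mat_def vec_eq_iff prod_eq_iff)

lemma transpose_kron: "transpose (kron A B) = kron (transpose A) (transpose B)"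
  by (simp add: kron_def transpose_def vec_eq_iff)

lemma invertible_kron:
  fixes A :: "real^'a^'a" and B :: "real^'b^'b"
  assumes "invertible A" "invertible B"
  shows "invertible (kron A B)"
    and matrix_inv_kron: "matrix_inv (kron A B) = kron (matrix_inv A) (matrix_inv B)"
proof -
  have "kron A B ** kron (matrix_inv A) (matrix_inv B) = mat 1"
    by (simp add: kron_mult matrix_inv_right assms kron_mat_1)
  then show "invertible (kron A B)" "matrix_inv (kron A B) = kron (matrix_inv A) (matrix_inv B)"
    using invertible_right_inverse matrix_inv_unique by blast+
qed

lemma vecm_mult: "vecm (A ** R ** transpose B) = kron B A *v vecm R"
  by (simp add: vecm_def kron_def matrix_matrix_mult_def matrix_vector_mult_def transpose_def
      vec_eq_iff sum_UNIV_prod sum_distrib_left mult_ac)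

lemma kronI_mult_vector: "kronI w *v y = (\<chi> p. w $ fst p * y $ snd p)"
proof -
  have "(\<Sum>j\<in>UNIV. w $ fst p * (if snd p = j then 1 else 0) * y $ j)
      = (\<Sum>j\<in>UNIV. if j = snd p then w $ fst p * y $ j else 0)" for p
    by (rule sum.cong) auto
  then show ?thesis by (simp add: kronI_def matrix_vector_mult_def vec_eq_iff)
qed

lemma kronI_matrix_mult: "kronI w ** K = (\<chi> p j. w $ fst p * K $ snd p $ j)"
proof -
  have "(\<Sum>l\<in>UNIV. w $ fst p * (if snd p = l then 1 else 0) * K $ l $ j)
      = (\<Sum>l\<in>UNIV. if l = snd p then w $ fst p * K $ l $ j else 0)" for p j
    by (rule sum.cong) auto
  then show ?thesis by (simp add: kronI_def matrix_matrix_mult_def vec_eq_iff)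
qed

lemma kron_mult_kronI: "kron H K ** kronI w = kronI (H *v w) ** K"
proof -
  have "(kron H K ** kronI w) $ p $ j = (kronI (H *v w) ** K) $ p $ j" for p j
  proof -
    have "(kron H K ** kronI w) $ p $ j
        = (\<Sum>q\<in>UNIV. kron H K $ p $ q * (w $ fst q * (if snd q = j then 1 else 0)))"
      by (simp add: kronI_def matrix_matrix_mult_def)
    also have "\<dots> = (\<Sum>a\<in>UNIV. H $ fst p $ a * w $ a * K $ snd p $ j)"
      by (simp add: kron_def sum_UNIV_prod if_distrib mult_ac cong: if_cong)
    also have "\<dots> = (kronI (H *v w) ** K) $ p $ j"
      by (simp add: kronI_matrix_mult matrix_vector_mult_def sum_distrib_right)
    finally show ?thesis .
  qed
  then show ?thesis by (simp add: vec_eq_iff)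
qed

lemma kronI_scaleR: "kronI (c *\<^sub>R w) = c *\<^sub>R kronI w"
  by (simp add: kronI_def vec_eq_iff)

lemma kronI_add: "kronI (v + w) = kronI v + kronI w"
  by (simp add: kronI_def vec_eq_iff algebra_simps)

lemma kronI_mult_vector_eq_0:
  assumes "w \<noteq> 0" "kronI w *v y = 0"
  shows "y = 0"
proof -
  obtain a where "w $ a \<noteq> 0" using assms(1) by (auto simp: vec_eq_iff)
  moreover have "w $ a * y $ j = 0" for j
    using arg_cong[OF assms(2), of "\<lambda>z. z $ (a, j)"] by (simp add: kronI_mult_vector)
  ultimately show ?thesis by (simp add: vec_eq_iff)
qed

lemma projm_colmat: "projm (colmat v) *v s = ((v \<bullet> s) / (v \<bullet> v)) *\<^sub>R v"
proof (cases "v = 0")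
  case True
  then have "colmat v = 0" by (simp add: colmat_def vec_eq_iff)
  then show ?thesis using True by (simp add: projm_def)
next
  case False
  have "(\<chi> i j. v \<bullet> v :: real^1^1) ** (\<chi> i j. 1 / (v \<bullet> v)) = mat 1"
    using False by (simp add: matrix_matrix_mult_def mat_def vec_eq_iff num1_eq_iff)
  moreover have "transpose (colmat v) ** colmat v = (\<chi> i j. v \<bullet> v)"
    by (simp add: colmat_def transpose_def matrix_matrix_mult_def vec_eq_iff inner_vec_def)
  ultimately have "matrix_inv (transpose (colmat v) ** colmat v) = (\<chi> i j. 1 / (v \<bullet> v))"
    using matrix_inv_unique by metis
  moreover have "transpose (colmat v) *v s = (\<chi> i. v \<bullet> s)"
    by (simp add: colmat_def transpose_def matrix_vector_mult_def vec_eq_iff inner_vec_def)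
  ultimately have "projm (colmat v) *v s
        = colmat v *v ((\<chi> i j. 1 / (v \<bullet> v) :: real^1^1) *v (\<chi> i. v \<bullet> s))"
    unfolding projm_def by (simp only: matrix_vector_mul_assoc[symmetric])
  then show ?thesis by (simp add: colmat_def matrix_vector_mult_def vec_eq_iff sum_1)
qed

section \<open>The statistics as quadratic forms\<close>

text \<open>\<open>block1 R\<close> is the first \<open>k\<close>-block \<open>(e\<^sub>1' \<otimes> I\<^sub>k) vec(R)\<close>; \<open>Tu\<close> and \<open>Tw\<close> are \<open>T\<close> with the factor
  \<open>M\<^sup>-\<^sup>1\<^sup>/\<^sup>2\<close> replaced by \<open>I\<close> and by \<open>M\<^sup>-\<^sup>1\<close>, so that \<open>T = M\<^sup>-\<^sup>1\<^sup>/\<^sup>2 Tu\<close> and \<open>D\<^sup>-\<^sup>1 T = Tw\<close>.\<close>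

definition block1 :: "real^2^'k \<Rightarrow> real^'k" where
  "block1 R = transpose (kronI e1 :: real^'k^(2 \<times> 'k)) *v vecm R"

definition Sigma11 :: "real^(2 \<times> 'k)^(2 \<times> 'k) \<Rightarrow> real^'k^'k" where
  "Sigma11 Sig = transpose (kronI e1) ** Sig ** (kronI e1 :: real^'k^(2 \<times> 'k))"

definition Tu :: "real^2^'k \<Rightarrow> real^(2 \<times> 'k)^(2 \<times> 'k) \<Rightarrow> real^'k" where
  "Tu R Sig = transpose (kronI e2 :: real^'k^(2 \<times> 'k)) *v (matrix_inv Sig *v vecm R)"

definition Tw :: "real^2^'k \<Rightarrow> real^(2 \<times> 'k)^(2 \<times> 'k) \<Rightarrow> real^'k" where
  "Tw R Sig = matrix_inv (Mmat Sig) *v Tu R Sig"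

lemma e1_neq_0: "e1 \<noteq> 0"
  by (simp add: e1_def)

lemma e2_neq_0: "e2 \<noteq> 0"
  by (simp add: e2_def)

lemma pos_def_Sigma11: "pos_def Sig \<Longrightarrow> pos_def (Sigma11 Sig)"
  unfolding Sigma11_def by (rule pos_def_congruence) (auto intro: kronI_mult_vector_eq_0[OF e1_neq_0])

lemma pos_def_Mmat: "pos_def Sig \<Longrightarrow> pos_def (Mmat Sig)"
  unfolding Mmat_def
  by (rule pos_def_congruence[OF pos_def_matrix_inv]) (auto intro: kronI_mult_vector_eq_0[OF e2_neq_0])

lemma AR_eq: "pos_def Sig \<Longrightarrow> AR R Sig = block1 R \<bullet> (matrix_inv (Sigma11 Sig) *v block1 R)"
  unfolding AR_def Sstat_def Cmat_def block1_def[symmetric] Sigma11_def[symmetric]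
  by (rule inner_matrix_inv_msqrt[OF pos_def_Sigma11])

lemma Tstat_inner_eq:
  "pos_def Sig \<Longrightarrow> Tstat R Sig \<bullet> Tstat R Sig = Tu R Sig \<bullet> (matrix_inv (Mmat Sig) *v Tu R Sig)"
  unfolding Tstat_def Tu_def[symmetric] by (rule inner_matrix_inv_msqrt[OF pos_def_Mmat])

lemma LM_eq:
  assumes Sig: "pos_def Sig"
  shows "LM R Sig = (block1 R \<bullet> (matrix_inv (Sigma11 Sig) *v Tw R Sig))^2
    / (Tw R Sig \<bullet> (matrix_inv (Sigma11 Sig) *v Tw R Sig))"
proof -
  let ?C = "Cmat Sig" and ?P = "matrix_inv (Sigma11 Sig)"
  have C: "?C = matrix_inv (msqrt (Sigma11 Sig))" unfolding Cmat_def Sigma11_def ..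
  have "transpose ?P = ?P" using pos_def_symmetric[OF pos_def_matrix_inv[OF pos_def_Sigma11[OF Sig]]] .
  define v where "v = ?C *v Tw R Sig"
  have "matrix_inv (Dmat Sig) *v Tstat R Sig = Tw R Sig"
    unfolding Dmat_def Tstat_def Tw_def Tu_def[symmetric]
    by (simp add: matrix_vector_mul_assoc matrix_inv_msqrt_square[OF pos_def_Mmat[OF Sig]])
  then have "LM R Sig = Sstat R Sig \<bullet> (((v \<bullet> Sstat R Sig) / (v \<bullet> v)) *\<^sub>R v)"
    unfolding LM_def v_def projm_colmat by simp
  also have "\<dots> = (v \<bullet> Sstat R Sig)^2 / (v \<bullet> v)"
    by (simp add: power2_eq_square inner_commute)
  also have "v \<bullet> Sstat R Sig = block1 R \<bullet> (?P *v Tw R Sig)"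
    unfolding v_def Sstat_def block1_def[symmetric] C inner_matrix_inv_msqrt[OF pos_def_Sigma11[OF Sig]]
    using inner_symmetric_matrix[OF \<open>transpose ?P = ?P\<close>, of "Tw R Sig" "block1 R"]
    by (simp add: inner_commute)
  also have "v \<bullet> v = Tw R Sig \<bullet> (?P *v Tw R Sig)"
    unfolding v_def C inner_matrix_inv_msqrt[OF pos_def_Sigma11[OF Sig]] ..
  finally show ?thesis .
qed

text \<open>\<open>lr_objective Sig x u = x'\<Sigma>\<^sup>-\<^sup>1x - (x - u)'\<Sigma>\<^sup>-\<^sup>1(x - u)\<close>; its maximum over the column space
  of \<open>K\<close> is \<open>projection_form Sig x K\<close>, the quantity under the supremum in \<open>LR\<close>.\<close>
definition lr_objective :: "real^'n^'n \<Rightarrow> real^'n \<Rightarrow> real^'n \<Rightarrow> real" where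
  "lr_objective Sig x u = 2 * (u \<bullet> (matrix_inv Sig *v x)) - u \<bullet> (matrix_inv Sig *v u)"

definition lr_values :: "real^(2 \<times> 'k::finite)^(2 \<times> 'k) \<Rightarrow> real^(2 \<times> 'k) \<Rightarrow> real set" where
  "lr_values Sig x = {lr_objective Sig x (kronI w *v y) | w y. True}"

lemma lr_objective_le:
  assumes Sig: "pos_def Sig"
  shows "lr_objective Sig x u \<le> x \<bullet> (matrix_inv Sig *v x)"
proof -
  let ?S = "matrix_inv Sig"
  have "x \<bullet> (?S *v u) = u \<bullet> (?S *v x)"
    using inner_symmetric_matrix[OF pos_def_symmetric[OF pos_def_matrix_inv[OF Sig]], of x u]
    by (simp add: inner_commute)
  then have "(x - u) \<bullet> (?S *v (x - u)) = x \<bullet> (?S *v x) - lr_objective Sig x u"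
    unfolding lr_objective_def
    by (simp add: matrix_vector_mult_diff_distrib inner_diff_left inner_diff_right algebra_simps)
  then show ?thesis using pos_def_nonneg[OF pos_def_matrix_inv[OF Sig], of "x - u"] by simp
qed

definition projection_form :: "real^'n^'n \<Rightarrow> real^'n \<Rightarrow> real^'m^'n \<Rightarrow> real" where
  "projection_form Sig x K =
    x \<bullet> (matrix_inv (msqrt Sig) *v (projm (matrix_inv (msqrt Sig) ** K) *v (matrix_inv (msqrt Sig) *v x)))"

lemma lr_objective_column_space_max:
  fixes K :: "real^'m^'n" and x :: "real^'n"
  assumes Sig: "pos_def Sig" and K: "\<And>y. K *v y = 0 \<Longrightarrow> y = 0"
  shows "lr_objective Sig x (K *v y) \<le> projection_form Sig x K"
    and "\<exists>y. lr_objective Sig x (K *v y) = projection_form Sig x K"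
proof -
  let ?S = "matrix_inv Sig"
  define Q where "Q = matrix_inv (msqrt Sig)"
  define f where "f = projection_form Sig x K"
  define P where "P = transpose K ** ?S ** K"
  define z where "z = transpose K *v (?S *v x)"
  have P: "pos_def P" unfolding P_def by (rule pos_def_congruence[OF pos_def_matrix_inv[OF Sig] K])
  have "transpose Q = Q" unfolding Q_def by (rule symmetric_matrix_inv_msqrt[OF Sig])
  have QQ: "Q ** Q = ?S" unfolding Q_def by (rule matrix_inv_msqrt_square[OF Sig])
  have QK: "transpose (Q ** K) ** (Q ** K) = P"
    unfolding P_def matrix_transpose_mul \<open>transpose Q = Q\<close> by (simp add: matrix_mul_assoc QQ[symmetric])
  have "f = (Q *v x) \<bullet> ((Q ** K) *v (matrix_inv P *v (transpose (Q ** K) *v (Q *v x))))"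
    unfolding f_def projection_form_def Q_def[symmetric] projm_def QK
    using inner_symmetric_matrix[OF \<open>transpose Q = Q\<close>]
    by (simp only: matrix_vector_mul_assoc[symmetric])
  also have "\<dots> = (transpose (Q ** K) *v (Q *v x)) \<bullet> (matrix_inv P *v (transpose (Q ** K) *v (Q *v x)))"
    by (rule inner_mult_vector_transpose)
  also have "transpose (Q ** K) *v (Q *v x) = z"
    unfolding z_def matrix_transpose_mul \<open>transpose Q = Q\<close>
    by (simp only: matrix_vector_mul_assoc matrix_mul_assoc QQ[symmetric])
  finally have fz: "f = z \<bullet> (matrix_inv P *v z)" .
  have obj: "lr_objective Sig x (K *v y) = 2 * (y \<bullet> z) - y \<bullet> (P *v y)" for y
    unfolding lr_objective_def z_def P_def
    by (simp only: inner_mult_vector_transpose matrix_vector_mul_assoc[symmetric] transpose_transpose)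
  text \<open>In the coordinates \<open>y\<close> the objective is \<open>f - (y - y\<^sub>0)'P(y - y\<^sub>0)\<close> with \<open>P y\<^sub>0 = z\<close>.\<close>
  define y0 where "y0 = matrix_inv P *v z"
  have "invertible P" by (rule pos_def_invertible[OF P])
  then have zP: "z = P *v y0" unfolding y0_def by (simp add: mult_vector_matrix_inv_cancel)
  then have f: "f = y0 \<bullet> (P *v y0)"
    unfolding fz y0_def[symmetric] by (simp add: inner_commute)
  have "y0 \<bullet> (P *v y) = y \<bullet> (P *v y0)"
    using inner_symmetric_matrix[OF pos_def_symmetric[OF P], of y0 y] by (simp add: inner_commute)
  then have "(y - y0) \<bullet> (P *v (y - y0)) = f - lr_objective Sig x (K *v y)"
    unfolding obj f zP
    by (simp add: matrix_vector_mult_diff_distrib inner_diff_left inner_diff_right algebra_simps)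
  then show "lr_objective Sig x (K *v y) \<le> projection_form Sig x K"
    using pos_def_nonneg[OF P, of "y - y0"] f_def by simp
  show "\<exists>y. lr_objective Sig x (K *v y) = projection_form Sig x K"
    unfolding f_def[symmetric]
    by (rule exI[of _ y0]) (simp add: obj f zP inner_commute)
qed

lemma aD_neq_0: "aD t \<noteq> 0"
  by (metis aD_def vector_2(2) zero_index zero_neq_one)

lemma eq_scaleR_aD: "w $ 2 \<noteq> 0 \<Longrightarrow> w = (w $ 2) *\<^sub>R aD (w $ 1 / w $ 2)"
  by (simp add: aD_def vec_eq_iff forall_2)

lemma lr_objective_add_scaleR:
  "lr_objective Sig x (u + t *\<^sub>R v) = lr_objective Sig x u
     + t * (2 * (v \<bullet> (matrix_inv Sig *v x)) - u \<bullet> (matrix_inv Sig *v v) - v \<bullet> (matrix_inv Sig *v u))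
     - t^2 * (v \<bullet> (matrix_inv Sig *v v))"
  unfolding lr_objective_def
  by (simp add: matrix_vector_right_distrib matrix_vector_mult_scaleR inner_add_left inner_add_right
      power2_eq_square algebra_simps)

lemma lr_objective_kronI_tendsto:
  assumes "s \<longlonglongrightarrow> 0"
  shows "(\<lambda>n. lr_objective Sig x (kronI (w + s n *\<^sub>R v) *v y)) \<longlonglongrightarrow> lr_objective Sig x (kronI w *v y)"
proof -
  let ?u = "kronI w *v y" and ?v = "kronI v *v y"
  define c1 where "c1 = 2 * (?v \<bullet> (matrix_inv Sig *v x))
      - ?u \<bullet> (matrix_inv Sig *v ?v) - ?v \<bullet> (matrix_inv Sig *v ?u)"
  define c2 where "c2 = ?v \<bullet> (matrix_inv Sig *v ?v)"
  have "lr_objective Sig x (kronI (w + s n *\<^sub>R v) *v y) = lr_objective Sig x ?u + s n * c1 - (s n)^2 * c2"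
    for n
    unfolding c1_def c2_def lr_objective_add_scaleR[symmetric]
    by (simp add: kronI_add kronI_scaleR matrix_vector_mult_add_rdistrib scaleR_matrix_vector_assoc)
  moreover have "(\<lambda>n. lr_objective Sig x ?u + s n * c1 - (s n)^2 * c2)
      \<longlonglongrightarrow> lr_objective Sig x ?u + 0 * c1 - 0^2 * c2"
    by (intro tendsto_intros assms)
  ultimately show ?thesis by simp
qed

text \<open>The directions \<open>a\<^sub>\<Delta>\<close> cover every line of \<open>\<real>\<^sup>2\<close> except the one through \<open>e\<^sub>1\<close>, which is reached as
  the limit \<open>\<Delta> \<rightarrow> \<infinity>\<close>; hence the supremum over \<open>\<Delta>\<close> is one over all \<open>w \<otimes> I\<^sub>k\<close>.\<close>
lemma SUP_projection_form_aD:
  fixes x :: "real^(2 \<times> 'k::finite)"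
  assumes Sig: "pos_def Sig"
  shows "(SUP t. projection_form Sig x (kronI (aD t) :: real^'k^(2 \<times> 'k))) = Sup (lr_values Sig x)"
proof -
  define F where "F t = projection_form Sig x (kronI (aD t) :: real^'k^(2 \<times> 'k))" for t
  have kronI_aD: "\<And>y. kronI (aD t) *v y = 0 \<Longrightarrow> y = 0" for t
    using kronI_mult_vector_eq_0[OF aD_neq_0] by blast
  have bdd: "bdd_above (lr_values Sig x)"
    unfolding lr_values_def using lr_objective_le[OF Sig] by (intro bdd_aboveI) blast
  have F_in: "F t \<in> lr_values Sig x" for t
  proof -
    obtain y where "F t = lr_objective Sig x (kronI (aD t) *v y)"
      using lr_objective_column_space_max(2)[OF Sig kronI_aD[of t], where x=x] unfolding F_def by metis
    then show ?thesis unfolding lr_values_def by blast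
  qed
  then have "bdd_above (range F)"
    using bdd by (meson bdd_above_mono image_subsetI)
  have le_SUP_aD: "lr_objective Sig x (kronI w *v y) \<le> (SUP t. F t)" if "w $ 2 \<noteq> 0" for w y
  proof -
    have "kronI w *v y = kronI (aD (w $ 1 / w $ 2)) *v ((w $ 2) *\<^sub>R y)"
      by (subst eq_scaleR_aD[OF that])
        (simp add: kronI_scaleR matrix_vector_mult_scaleR scaleR_matrix_vector_assoc)
    then have "lr_objective Sig x (kronI w *v y) \<le> F (w $ 1 / w $ 2)"
      using lr_objective_column_space_max(1)[OF Sig kronI_aD] unfolding F_def by simp
    also have "\<dots> \<le> (SUP t. F t)" by (rule cSUP_upper[OF UNIV_I \<open>bdd_above (range F)\<close>])
    finally show ?thesis .
  qed
  have le_SUP: "lr_objective Sig x (kronI w *v y) \<le> (SUP t. F t)" for w y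
  proof (cases "w $ 2 = 0")
    case True
    define s where "s n = inverse (real (Suc n))" for n
    have "(w + s n *\<^sub>R e2) $ 2 \<noteq> 0" for n using True by (simp add: e2_def s_def)
    then have "lr_objective Sig x (kronI (w + s n *\<^sub>R e2) *v y) \<le> (SUP t. F t)" for n
      by (rule le_SUP_aD)
    moreover have "s \<longlonglongrightarrow> 0" unfolding s_def by (rule LIMSEQ_inverse_real_of_nat)
    ultimately show ?thesis by (intro LIMSEQ_le_const2[OF lr_objective_kronI_tendsto]) auto
  qed (rule le_SUP_aD)
  have "(SUP t. F t) \<le> Sup (lr_values Sig x)"
    by (rule cSUP_least) (auto intro: cSup_upper[OF F_in bdd])
  moreover have "Sup (lr_values Sig x) \<le> (SUP t. F t)"
    by (rule cSup_least) (auto simp: lr_values_def le_SUP)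
  ultimately show ?thesis unfolding F_def by simp
qed

lemma LR_eq: "pos_def Sig \<Longrightarrow> LR R Sig = Sup (lr_values Sig (vecm R)) - Tstat R Sig \<bullet> Tstat R Sig"
  unfolding LR_def projection_form_def[symmetric] SUP_projection_form_aD ..

section \<open>Invariance under the group action\<close>

locale lower_triangular_action =
  fixes g1 :: "real^'k::finite^'k" and g2 :: "real^2^2"
  assumes invertible_g1: "invertible g1" and invertible_g2: "invertible g2"
    and lower_tri: "lower_tri2 g2"
begin

abbreviation G :: "real^(2 \<times> 'k)^(2 \<times> 'k)" where
  "G \<equiv> kron g2 g1"

lemma invertible_G: "invertible G"
  using invertible_kron(1)[OF invertible_g2 invertible_g1] .

lemma vecm_actR: "vecm (actR g1 g2 R) = G *v vecm R"
  unfolding actR_def by (rule vecm_mult)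

lemma actS_eq: "actS g1 g2 Sig = G ** Sig ** transpose G"
  unfolding actS_def by (simp add: transpose_kron)

lemma pos_def_actS: "pos_def Sig \<Longrightarrow> pos_def (actS g1 g2 Sig)"
  unfolding actS_eq
  using pos_def_congruence[of Sig "transpose G"]
    invertible_mult_vector_eq_0[OF transpose_invertible[OF invertible_G]]
  by simp

lemma matrix_inv_actS:
  "pos_def Sig \<Longrightarrow> matrix_inv (actS g1 g2 Sig)
    = transpose (matrix_inv G) ** matrix_inv Sig ** matrix_inv G"
  unfolding actS_eq
  by (simp add: matrix_inv_mult invertible_G pos_def_invertible invertible_mult transpose_invertible
      matrix_inv_transpose matrix_mul_assoc)

lemma transpose_g2_e1: "transpose g2 *v e1 = (g2 $ 1 $ 1) *\<^sub>R e1"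
  using lower_tri unfolding e1_def lower_tri2_def
  by (simp add: vec_eq_iff forall_2 transpose_def matrix_vector_mult_def sum_2 axis_def)

lemma g2_e2: "g2 *v e2 = (g2 $ 2 $ 2) *\<^sub>R e2"
  using lower_tri unfolding e2_def lower_tri2_def
  by (simp add: vec_eq_iff forall_2 matrix_vector_mult_def sum_2 axis_def)

lemma g2_11_neq_0: "g2 $ 1 $ 1 \<noteq> 0"
  using transpose_g2_e1 invertible_mult_vector_eq_0[OF transpose_invertible[OF invertible_g2]] e1_neq_0
  by force

lemma g2_22_neq_0: "g2 $ 2 $ 2 \<noteq> 0"
  using g2_e2 invertible_mult_vector_eq_0[OF invertible_g2] e2_neq_0 by force

lemma matrix_inv_g2_e2: "matrix_inv g2 *v e2 = (1 / g2 $ 2 $ 2) *\<^sub>R e2"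
proof -
  have "e2 = (g2 $ 2 $ 2) *\<^sub>R (matrix_inv g2 *v e2)"
    using matrix_inv_mult_vector_cancel[OF invertible_g2, of e2]
    by (simp add: g2_e2 matrix_vector_mult_scaleR)
  then have "(1 / g2 $ 2 $ 2) *\<^sub>R e2 = ((1 / g2 $ 2 $ 2) * g2 $ 2 $ 2) *\<^sub>R (matrix_inv g2 *v e2)"
    by (metis scaleR_scaleR)
  then show ?thesis using g2_22_neq_0 by simp
qed

definition L1 :: "real^'k^'k" where
  "L1 = g2 $ 1 $ 1 *\<^sub>R g1"

definition L2 :: "real^'k^'k" where
  "L2 = (1 / g2 $ 2 $ 2) *\<^sub>R transpose (matrix_inv g1)"

lemma invertible_L1: "invertible L1"
  unfolding L1_def by (rule scalar_invertible[OF g2_11_neq_0 invertible_g1])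

lemma invertible_L2: "invertible L2"
  unfolding L2_def using g2_22_neq_0
  by (intro scalar_invertible transpose_invertible invertible_matrix_inv invertible_g1) simp

lemma transpose_G_kronI_e1: "transpose G ** kronI e1 = kronI e1 ** transpose L1"
proof -
  have "transpose G ** kronI e1 = kronI (transpose g2 *v e1) ** transpose g1"
    by (simp add: transpose_kron kron_mult_kronI del: transpose_matrix_vector)
  then show ?thesis
    by (simp add: L1_def transpose_g2_e1 kronI_scaleR transpose_scalar matrix_scalar_ac
        del: transpose_matrix_vector)
qed

lemma matrix_inv_G_kronI_e2: "matrix_inv G ** kronI e2 = kronI e2 ** transpose L2"
proof -
  have "matrix_inv G ** kronI e2 = kronI (matrix_inv g2 *v e2) ** matrix_inv g1"
    by (simp add: matrix_inv_kron[OF invertible_g2 invertible_g1] kron_mult_kronI)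
  then show ?thesis
    by (simp add: L2_def matrix_inv_g2_e2 kronI_scaleR transpose_scalar matrix_scalar_ac)
qed

lemma kronI_e1_transpose_G: "transpose (kronI e1) ** G = L1 ** transpose (kronI e1)"
  using arg_cong[OF transpose_G_kronI_e1, of transpose] by (simp add: matrix_transpose_mul)

lemma kronI_e2_transpose_matrix_inv_G:
  "transpose (kronI e2) ** transpose (matrix_inv G) = L2 ** transpose (kronI e2)"
  using arg_cong[OF matrix_inv_G_kronI_e2, of transpose] by (simp add: matrix_transpose_mul)

lemma block1_act: "block1 (actR g1 g2 R) = L1 *v block1 R"
  unfolding block1_def vecm_actR
  by (simp add: matrix_vector_mul_assoc kronI_e1_transpose_G del: transpose_matrix_vector)

lemma Sigma11_act: "Sigma11 (actS g1 g2 Sig) = L1 ** Sigma11 Sig ** transpose L1"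
proof -
  have "Sigma11 (actS g1 g2 Sig) = (transpose (kronI e1) ** G) ** Sig ** (transpose G ** kronI e1)"
    unfolding Sigma11_def actS_eq by (simp add: matrix_mul_assoc)
  then show ?thesis
    unfolding kronI_e1_transpose_G transpose_G_kronI_e1 Sigma11_def by (simp add: matrix_mul_assoc)
qed

lemma Tu_act:
  assumes "pos_def Sig"
  shows "Tu (actR g1 g2 R) (actS g1 g2 Sig) = L2 *v Tu R Sig"
proof -
  have "Tu (actR g1 g2 R) (actS g1 g2 Sig) = (transpose (kronI e2) ** transpose (matrix_inv G))
      *v (matrix_inv Sig *v (matrix_inv G *v (G *v vecm R)))"
    unfolding Tu_def vecm_actR matrix_inv_actS[OF assms]
    by (simp only: matrix_vector_mul_assoc matrix_mul_assoc)
  then show ?thesis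
    unfolding kronI_e2_transpose_matrix_inv_G matrix_inv_mult_vector_cancel[OF invertible_G] Tu_def
    by (simp only: matrix_vector_mul_assoc matrix_mul_assoc)
qed

lemma Mmat_act:
  assumes "pos_def Sig"
  shows "Mmat (actS g1 g2 Sig) = L2 ** Mmat Sig ** transpose L2"
proof -
  have "Mmat (actS g1 g2 Sig)
      = (transpose (kronI e2) ** transpose (matrix_inv G))
        ** matrix_inv Sig ** (matrix_inv G ** kronI e2)"
    unfolding Mmat_def matrix_inv_actS[OF assms] by (simp add: matrix_mul_assoc)
  then show ?thesis
    unfolding kronI_e2_transpose_matrix_inv_G matrix_inv_G_kronI_e2 Mmat_def
    by (simp add: matrix_mul_assoc)
qed

lemma transpose_matrix_inv_L2: "transpose (matrix_inv L2) = (g2 $ 2 $ 2 / g2 $ 1 $ 1) *\<^sub>R L1"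
proof -
  have "matrix_inv L2 = g2 $ 2 $ 2 *\<^sub>R transpose g1"
    unfolding L2_def using g2_22_neq_0
    by (simp add: matrix_inv_scaleR transpose_invertible invertible_matrix_inv invertible_g1
        matrix_inv_transpose matrix_inv_matrix_inv)
  then show ?thesis using g2_11_neq_0 by (simp add: L1_def transpose_scalar)
qed

lemma Tw_act:
  assumes Sig: "pos_def Sig"
  shows "Tw (actR g1 g2 R) (actS g1 g2 Sig) = L1 *v ((g2 $ 2 $ 2 / g2 $ 1 $ 1) *\<^sub>R Tw R Sig)"
proof -
  have "invertible (Mmat Sig)" by (rule pos_def_invertible[OF pos_def_Mmat[OF Sig]])
  then have "matrix_inv (L2 ** Mmat Sig ** transpose L2)
      = transpose (matrix_inv L2) ** matrix_inv (Mmat Sig) ** matrix_inv L2"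
    by (simp add: matrix_inv_mult invertible_L2 transpose_invertible invertible_mult
        matrix_inv_transpose matrix_mul_assoc)
  then have "Tw (actR g1 g2 R) (actS g1 g2 Sig) = transpose (matrix_inv L2) *v Tw R Sig"
    unfolding Tw_def Mmat_act[OF Sig] Tu_act[OF Sig]
    by (simp only: matrix_vector_mul_assoc[symmetric] matrix_inv_mult_vector_cancel[OF invertible_L2])
  then show ?thesis
    by (simp add: transpose_matrix_inv_L2 matrix_vector_mult_scaleR scaleR_matrix_vector_assoc
        del: transpose_matrix_vector)
qed

lemma AR_act: "pos_def Sig \<Longrightarrow> AR (actR g1 g2 R) (actS g1 g2 Sig) = AR R Sig"
  unfolding AR_eq[OF pos_def_actS] AR_eq block1_act Sigma11_act
  by (rule inner_matrix_inv_congruence[OF invertible_L1 pos_def_invertible[OF pos_def_Sigma11]])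

lemma Tstat_inner_act:
  "pos_def Sig \<Longrightarrow> Tstat (actR g1 g2 R) (actS g1 g2 Sig) \<bullet> Tstat (actR g1 g2 R) (actS g1 g2 Sig)
    = Tstat R Sig \<bullet> Tstat R Sig"
  unfolding Tstat_inner_eq[OF pos_def_actS] Tstat_inner_eq Tu_act Mmat_act
  by (rule inner_matrix_inv_congruence[OF invertible_L2 pos_def_invertible[OF pos_def_Mmat]])

lemma LM_act:
  assumes Sig: "pos_def Sig"
  shows "LM (actR g1 g2 R) (actS g1 g2 Sig) = LM R Sig"
proof -
  define c where "c = g2 $ 2 $ 2 / g2 $ 1 $ 1"
  have "c \<noteq> 0" unfolding c_def using g2_11_neq_0 g2_22_neq_0 by simp
  let ?P = "matrix_inv (Sigma11 Sig)" and ?w = "Tw R Sig" and ?r = "block1 R"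
  have congruence: "(L1 *v y) \<bullet> (matrix_inv (L1 ** Sigma11 Sig ** transpose L1) *v (L1 *v z))
      = y \<bullet> (?P *v z)"
    for y z
    by (rule inner_matrix_inv_congruence[OF invertible_L1 pos_def_invertible[OF pos_def_Sigma11[OF Sig]]])
  have "LM (actR g1 g2 R) (actS g1 g2 Sig)
      = (?r \<bullet> (?P *v (c *\<^sub>R ?w)))^2 / ((c *\<^sub>R ?w) \<bullet> (?P *v (c *\<^sub>R ?w)))"
    unfolding LM_eq[OF pos_def_actS[OF Sig]] Tw_act[OF Sig] block1_act Sigma11_act
      c_def[symmetric] congruence ..
  also have "\<dots> = (c^2 * (?r \<bullet> (?P *v ?w))^2) / (c^2 * (?w \<bullet> (?P *v ?w)))"
    by (simp add: matrix_vector_mult_scaleR power2_eq_square mult_ac)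
  also have "\<dots> = LM R Sig"
    unfolding LM_eq[OF Sig] using \<open>c \<noteq> 0\<close> by simp
  finally show ?thesis .
qed

lemma QLR_act: "pos_def Sig \<Longrightarrow> QLR (actR g1 g2 R) (actS g1 g2 Sig) = QLR R Sig"
  unfolding QLR_def by (simp only: AR_act Tstat_inner_act LM_act)

lemma lr_objective_act:
  assumes "pos_def Sig"
  shows "lr_objective (actS g1 g2 Sig) (G *v x) u = lr_objective Sig x (matrix_inv G *v u)"
proof -
  have "(transpose (matrix_inv G) ** matrix_inv Sig ** matrix_inv G) *v v
      = transpose (matrix_inv G) *v (matrix_inv Sig *v (matrix_inv G *v v))" for v
    by (simp only: matrix_vector_mul_assoc matrix_mul_assoc)
  then show ?thesis
    unfolding lr_objective_def matrix_inv_actS[OF assms]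
    by (simp only: inner_transpose_mult_vector matrix_inv_mult_vector_cancel[OF invertible_G])
qed

lemma matrix_inv_G_kronI: "matrix_inv G *v (kronI w *v y)
    = kronI (matrix_inv g2 *v w) *v (matrix_inv g1 *v y)"
  by (simp only: matrix_inv_kron[OF invertible_g2 invertible_g1] matrix_vector_mul_assoc kron_mult_kronI)

lemma lr_values_act:
  assumes Sig: "pos_def Sig"
  shows "lr_values (actS g1 g2 Sig) (vecm (actR g1 g2 R)) = lr_values Sig (vecm R)"
proof -
  have act: "lr_objective (actS g1 g2 Sig) (vecm (actR g1 g2 R)) (kronI w *v y)
      = lr_objective Sig (vecm R) (kronI (matrix_inv g2 *v w) *v (matrix_inv g1 *v y))" for w y
    unfolding vecm_actR lr_objective_act[OF Sig] matrix_inv_G_kronI ..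
  have "lr_objective Sig (vecm R) (kronI w *v y)
      = lr_objective (actS g1 g2 Sig) (vecm (actR g1 g2 R)) (kronI (g2 *v w) *v (g1 *v y))" for w y
    unfolding act by (simp add: matrix_inv_mult_vector_cancel invertible_g1 invertible_g2)
  then show ?thesis
    unfolding lr_values_def act by blast
qed

lemma LR_act: "pos_def Sig \<Longrightarrow> LR (actR g1 g2 R) (actS g1 g2 Sig) = LR R Sig"
  unfolding LR_eq[OF pos_def_actS] LR_eq lr_values_act Tstat_inner_act ..

end

theorem proposition4:
  fixes R0 :: "real^2^'k" and Sig0 :: "real^(2 \<times> 'k)^(2 \<times> 'k)"
    and g1 :: "real^'k^'k" and g2 :: "real^2^2"
  assumes "pos_def Sig0"
    and "invertible g1"
    and "invertible g2" and "lower_tri2 g2"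
  shows "AR (actR g1 g2 R0) (actS g1 g2 Sig0) = AR R0 Sig0
       \<and> LM (actR g1 g2 R0) (actS g1 g2 Sig0) = LM R0 Sig0
       \<and> LR (actR g1 g2 R0) (actS g1 g2 Sig0) = LR R0 Sig0
       \<and> QLR (actR g1 g2 R0) (actS g1 g2 Sig0) = QLR R0 Sig0"
proof -
  interpret lower_triangular_action g1 g2
    using assms(2-4) by unfold_locales
  show ?thesis
    using AR_act LM_act LR_act QLR_act assms(1) by blast
qed
end
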